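(* Let $\epsilon\in(0,1)$. Suppose $W=(W_1,\dots,W_n)\in\{0,1\}^n$ satisfies the $\epsilon$-martingale condition, and let $B=(B_1,\dots,B_n)\in\{0,1\}^n$ have independent coordinates with $\Pr[B_i=1]=(1-\epsilon)/2$. Let $R_\infty$ be a random variable on $\{0,1,2,\dots\}$ with \[ \Pr[R_\infty=k]=\frac{2\epsilon}{1+\epsilon}\left(\frac{1-\epsilon}{1+\epsilon}\right)^k,\qquad k=0,1,2,\dots. \] Then $\rho(W)\preceq\rho(B)\preceq R_\infty$, i.e., $\rho(B)$ stochastically dominates $\rho(W)$ and $R_\infty$ stochastically dominates $\rho(B)$.
   Context: Characteristic strings and forks. For $w=w_1\dots w_n\in\{0,1\}^n$ (index $i$ honest if $w_i=0$, adversarial if $w_i=1$), a fork for $w$ is a rooted tree with edges directed away from the root $r$ and labeling $\ell:V\to\{0,\dots,n\}$ with (F1) $\ell(r)=0$; (F2) labels strictly increasing along directed paths; (F3) each honest index labels exactly one vertex; (F4) for honest $i<j$ the vertex labeled $i$ has strictly smaller depth than the vertex labeled $j$. A vertex is honest if it is the root or labeled by an honest index. A tine is a directed path from the root; its length is its number of edges, $\ell(t)$ the label of its last vertex. A fork is closed if every leaf is honest; a closed fork has a unique longest tine $\hat t$. For closed $F$ and tine $t$: $\mathrm{gap}(t)=\mathrm{length}(\hat t)-\mathrm{length}(t)$, $\mathrm{reserve}(t)=|\{i:w_i=1,\ i>\ell(t)\}|$, $\mathrm{reach}(t)=\mathrm{reserve}(t)-\mathrm{gap}(t)$; $\rho(F)=\max_t\mathrm{reach}(t)$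 and $\rho(w)=\max\{\rho(F):F \text{ a closed fork for } w\}$. A random variable $W\in\{0,1\}^n$ satisfies the $\epsilon$-martingale condition if for every $t$, $\Pr[W_t=1\mid W_1,\dots,W_{t-1}]\le(1-\epsilon)/2$ for arbitrary conditioning values. For real random variables, $Y\preceq X$ ($X$ stochastically dominates $Y$) means $\Pr[X\ge\Lambda]\ge\Pr[Y\ge\Lambda]$ for every $\Lambda\in\mathbb{R}$. *)

theory Defs
  imports "HOL-Probability.Probability" "HOL-Library.Sublist"
begin

text \<open>Characteristic strings are bool lists: entry i (1-based) is w ! (i-1);
  True = 1 = adversarial, False = 0 = honest.\<close>

definition honest_idx :: "bool list \<Rightarrow> nat \<Rightarrow> bool" where
  "honest_idx w i \<longleftrightarrow> 1 \<le> i \<and> i \<le> length w \<and> \<not> w ! (i - 1)"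

text \<open>A fork is a finite rooted tree whose vertices are tree addresses (nat lists),
  the root being the empty list and the parent of a vertex being its butlast;
  l is the labelling. Depth of vertex v = length v; the tine ending in v is the
  path from the root to v.\<close>

definition is_fork :: "bool list \<Rightarrow> nat list set \<Rightarrow> (nat list \<Rightarrow> nat) \<Rightarrow> bool" where
  "is_fork w V l \<longleftrightarrow>
     finite V \<and> [] \<in> V \<and> (\<forall>v\<in>V. \<forall>u. prefix u v \<longrightarrow> u \<in> V) \<and>
     (\<forall>v\<in>V. l v \<le> length w) \<and>
     l [] = 0 \<and>
     (\<forall>u\<in>V. \<forall>v\<in>V. strict_prefix u v \<longrightarrow> l u < l v) \<and>
     (\<forall>i. honest_idx w i \<longrightarrow> card {v\<in>V. l v = i} = 1) \<and>
     (\<forall>u\<in>V. \<forall>v\<in>V. honest_idx w (l u) \<and> honest_idx w (l v) \<and> l u < l v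
        \<longrightarrow> length u < length v)"

definition honest_vertex :: "bool list \<Rightarrow> (nat list \<Rightarrow> nat) \<Rightarrow> nat list \<Rightarrow> bool" where
  "honest_vertex w l v \<longleftrightarrow> v = [] \<or> honest_idx w (l v)"

definition is_leaf :: "nat list set \<Rightarrow> nat list \<Rightarrow> bool" where
  "is_leaf V v \<longleftrightarrow> v \<in> V \<and> \<not> (\<exists>u\<in>V. strict_prefix v u)"

definition closed_fork :: "bool list \<Rightarrow> nat list set \<Rightarrow> (nat list \<Rightarrow> nat) \<Rightarrow> bool" where
  "closed_fork w V l \<longleftrightarrow> is_fork w V l \<and> (\<forall>v. is_leaf V v \<longrightarrow> honest_vertex w l v)"

definition fork_height :: "nat list set \<Rightarrow> nat" where
  "fork_height V = Max (length ` V)"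

definition gap :: "nat list set \<Rightarrow> nat list \<Rightarrow> nat" where
  "gap V v = fork_height V - length v"

definition reserve :: "bool list \<Rightarrow> (nat list \<Rightarrow> nat) \<Rightarrow> nat list \<Rightarrow> nat" where
  "reserve w l v = card {i. 1 \<le> i \<and> i \<le> length w \<and> w ! (i - 1) \<and> i > l v}"

definition reach :: "bool list \<Rightarrow> nat list set \<Rightarrow> (nat list \<Rightarrow> nat) \<Rightarrow> nat list \<Rightarrow> int" where
  "reach w V l v = int (reserve w l v) - int (gap V v)"

definition rho_fork :: "bool list \<Rightarrow> nat list set \<Rightarrow> (nat list \<Rightarrow> nat) \<Rightarrow> int" where
  "rho_fork w V l = Max (reach w V l ` V)"

definition rho :: "bool list \<Rightarrow> int" where
  "rho w = Max {rho_fork w V l | V l. closed_fork w V l}"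

text \<open>Epsilon-martingale condition for a distribution on length-n strings
  (0-based position t, i.e. coordinate W_(t+1)); conditioning written multiplicatively.\<close>
definition eps_martingale :: "real \<Rightarrow> nat \<Rightarrow> bool list pmf \<Rightarrow> bool" where
  "eps_martingale \<epsilon> n W \<longleftrightarrow>
     (\<forall>t < n. \<forall>p. length p = t \<longrightarrow>
        measure_pmf.prob W {w. take t w = p \<and> w ! t}
          \<le> (1 - \<epsilon>) / 2 * measure_pmf.prob W {w. take t w = p})"

fun bernoulli_list :: "nat \<Rightarrow> real \<Rightarrow> bool list pmf" where
  "bernoulli_list 0 q = return_pmf []"
| "bernoulli_list (Suc n) q =
     bind_pmf (bernoulli_pmf q) (\<lambda>b. map_pmf (\<lambda>bs. b # bs) (bernoulli_list n q))"

end

theory Submission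
  imports Defs
begin

(* Closed forks of w can be turned into closed forks of w1 and w0 and back, so that rho obeys the
   recursion of a random walk reflected at 0: rho(w1) = rho(w) + 1 and rho(w0) = max(rho(w) - 1, 0).
   For w1 the forks are the same and every reserve grows by one. For w0, extending a deepest tine
   by the new honest vertex lengthens the longest tine, lowering every reach by one; conversely,
   pruning a fork of w0 to the tines that end in vertices honest for w gives a closed fork of w
   whose reaches are larger by at least one, because the maximal reach is attained at an honest
   vertex and the new honest vertex has reserve 0.

   Both dominations are then statements about this walk. A walk whose up-steps have conditional
   probability at most q is dominated by the walk with independent Bernoulli(q) steps: the tail
   probability of the latter is monotone in the starting point, so moving conditional probability
   onto the up-step can only increase it (induction on the first step). The geometric law with
   ratio q / (1 - q) = (1 - eps) / (1 + eps) is stationary for the Bernoulli walk, and induction on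
   the last step shows that the walk started at 0 stays below it in tail. *)

fun reflected_walk :: "nat \<Rightarrow> bool list \<Rightarrow> nat" where
  "reflected_walk s [] = s"
| "reflected_walk s (b # bs) = reflected_walk (if b then Suc s else s - 1) bs"

lemma reflected_walk_snoc:
  "reflected_walk s (w @ [b]) = (if b then Suc (reflected_walk s w) else reflected_walk s w - 1)"
  by (induction w arbitrary: s) auto

lemma reflected_walk_mono: "s \<le> s' \<Longrightarrow> reflected_walk s w \<le> reflected_walk s' w"
  by (induction w arbitrary: s s') auto

lemma honest_idx_snoc:
  "honest_idx (w @ [b]) i \<longleftrightarrow> honest_idx w i \<or> (i = Suc (length w) \<and> \<not> b)"
  unfolding honest_idx_def by (auto simp: nth_append)

lemma honest_vertex_snoc_True: "honest_vertex (w @ [True]) l v \<longleftrightarrow> honest_vertex w l v"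
  unfolding honest_vertex_def by (simp add: honest_idx_snoc)

lemma is_fork_finite: "is_fork w V l \<Longrightarrow> finite V"
  unfolding is_fork_def by blast

lemma is_fork_root: "is_fork w V l \<Longrightarrow> [] \<in> V"
  unfolding is_fork_def by blast

lemma is_fork_prefix_closed: "is_fork w V l \<Longrightarrow> v \<in> V \<Longrightarrow> prefix u v \<Longrightarrow> u \<in> V"
  unfolding is_fork_def by blast

lemma is_fork_label_le: "is_fork w V l \<Longrightarrow> v \<in> V \<Longrightarrow> l v \<le> length w"
  unfolding is_fork_def by blast

lemma is_fork_label_root: "is_fork w V l \<Longrightarrow> l [] = 0"
  unfolding is_fork_def by blast

lemma is_fork_label_less:
  "is_fork w V l \<Longrightarrow> u \<in> V \<Longrightarrow> v \<in> V \<Longrightarrow> strict_prefix u v \<Longrightarrow> l u < l v"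
  unfolding is_fork_def by blast

lemma is_fork_label_mono:
  "is_fork w V l \<Longrightarrow> u \<in> V \<Longrightarrow> v \<in> V \<Longrightarrow> prefix u v \<Longrightarrow> l u \<le> l v"
  using is_fork_label_less[of w V l u v] by (cases "u = v") (auto simp: strict_prefix_def)

lemma is_fork_honest_unique: "is_fork w V l \<Longrightarrow> honest_idx w i \<Longrightarrow> card {v\<in>V. l v = i} = 1"
  unfolding is_fork_def by blast

lemma is_fork_honest_depth:
  "is_fork w V l \<Longrightarrow> u \<in> V \<Longrightarrow> v \<in> V \<Longrightarrow> honest_idx w (l u) \<Longrightarrow> honest_idx w (l v)
    \<Longrightarrow> l u < l v \<Longrightarrow> length u < length v"
  unfolding is_fork_def by blast

lemma fork_height_ge: "finite V \<Longrightarrow> v \<in> V \<Longrightarrow> length v \<le> fork_height V"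
  unfolding fork_height_def by simp

lemma fork_height_attained: "finite V \<Longrightarrow> V \<noteq> {} \<Longrightarrow> \<exists>d\<in>V. length d = fork_height V"
  unfolding fork_height_def using Max_in[of "length ` V"] by fastforce

lemma finite_adversarial_after: "finite {i. 1 \<le> i \<and> i \<le> length w \<and> w ! (i - 1) \<and> i > k}"
  by (rule finite_subset[of _ "{1..length w}"]) auto

lemma reserve_le_length: "reserve w l v \<le> length w"
proof -
  have "reserve w l v \<le> card {1..length w}"
    unfolding reserve_def by (intro card_mono) auto
  then show ?thesis by simp
qed

lemma reserve_eq_0: "length w \<le> l v \<Longrightarrow> reserve w l v = 0"
  unfolding reserve_def by auto

lemma reserve_snoc_False: "reserve (w @ [False]) l v = reserve w l v"
proof -
  have "{i. 1 \<le> i \<and> i \<le> length (w @ [False]) \<and> (w @ [False]) ! (i - 1) \<and> i > l v}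
      = {i. 1 \<le> i \<and> i \<le> length w \<and> w ! (i - 1) \<and> i > l v}"
    by (auto simp: nth_append le_Suc_eq)
  then show ?thesis unfolding reserve_def by simp
qed

lemma reserve_snoc_True: "l v \<le> length w \<Longrightarrow> reserve (w @ [True]) l v = Suc (reserve w l v)"
proof -
  assume "l v \<le> length w"
  then have "{i. 1 \<le> i \<and> i \<le> length (w @ [True]) \<and> (w @ [True]) ! (i - 1) \<and> i > l v}
      = insert (Suc (length w)) {i. 1 \<le> i \<and> i \<le> length w \<and> w ! (i - 1) \<and> i > l v}"
    by (auto simp: nth_append le_Suc_eq)
  then show ?thesis unfolding reserve_def by (simp add: finite_adversarial_after)
qed

lemma reserve_less_if_adversarial:
  assumes "l u < l v" "l v \<le> length w" "w ! (l v - 1)"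
  shows "reserve w l v < reserve w l u"
proof -
  have "insert (l v) {i. 1 \<le> i \<and> i \<le> length w \<and> w ! (i - 1) \<and> i > l v}
      \<subseteq> {i. 1 \<le> i \<and> i \<le> length w \<and> w ! (i - 1) \<and> i > l u}"
    using assms by auto
  then have "card (insert (l v) {i. 1 \<le> i \<and> i \<le> length w \<and> w ! (i - 1) \<and> i > l v})
      \<le> reserve w l u"
    unfolding reserve_def by (intro card_mono finite_adversarial_after)
  then show ?thesis unfolding reserve_def by (simp add: finite_adversarial_after)
qed

lemma reach_le_rho_fork:
  assumes "is_fork w V l" "v \<in> V"
  shows "reach w V l v \<le> rho_fork w V l"
  unfolding rho_fork_def using is_fork_finite[OF assms(1)] assms(2) by (intro Max_ge) auto

lemma rho_fork_le_iff:
  assumes "is_fork w V l"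
  shows "rho_fork w V l \<le> r \<longleftrightarrow> (\<forall>v\<in>V. reach w V l v \<le> r)"
  using is_fork_finite[OF assms] is_fork_root[OF assms] unfolding rho_fork_def
  by (subst Max_le_iff) auto

lemma rho_fork_attained:
  assumes "is_fork w V l"
  shows "\<exists>v\<in>V. reach w V l v = rho_fork w V l"
proof -
  have "rho_fork w V l \<in> reach w V l ` V"
    unfolding rho_fork_def using is_fork_finite[OF assms] is_fork_root[OF assms]
    by (intro Max_in) auto
  then show ?thesis by auto
qed

lemma rho_fork_nonneg:
  assumes f: "is_fork w V l"
  shows "0 \<le> rho_fork w V l"
proof -
  obtain d where "d \<in> V" "length d = fork_height V"
    using fork_height_attained[OF is_fork_finite[OF f]] is_fork_root[OF f] by blast
  then have "reach w V l d \<ge> 0" unfolding reach_def gap_def by simp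
  with reach_le_rho_fork[OF f \<open>d \<in> V\<close>] show ?thesis by linarith
qed

lemma rho_fork_le_length:
  assumes "is_fork w V l"
  shows "rho_fork w V l \<le> int (length w)"
  unfolding rho_fork_le_iff[OF assms] reach_def
proof
  fix v
  have "int (reserve w l v) \<le> int (length w)" using reserve_le_length by simp
  then show "int (reserve w l v) - int (gap V v) \<le> int (length w)" by linarith
qed

lemma reach_snoc_le:
  assumes f: "is_fork w V l" and v: "v @ [x] \<in> V" and adv: "\<not> honest_vertex w l (v @ [x])"
  shows "reach w V l (v @ [x]) \<le> reach w V l v"
proof -
  have vV: "v \<in> V" using is_fork_prefix_closed[OF f v] by simp
  have lt: "l v < l (v @ [x])" using is_fork_label_less[OF f vV v] by (simp add: strict_prefix_def)
  moreover have le: "l (v @ [x]) \<le> length w" using is_fork_label_le[OF f v] .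
  moreover have "w ! (l (v @ [x]) - 1)"
    using adv lt le unfolding honest_vertex_def honest_idx_def by auto
  ultimately have "reserve w l (v @ [x]) < reserve w l v" by (rule reserve_less_if_adversarial)
  moreover have "length (v @ [x]) \<le> fork_height V" using fork_height_ge[OF is_fork_finite[OF f] v] .
  ultimately show ?thesis unfolding reach_def gap_def by simp
qed

lemma reach_le_honest_ancestor:
  assumes f: "is_fork w V l"
  shows "v \<in> V \<Longrightarrow> \<exists>h. prefix h v \<and> honest_vertex w l h \<and> reach w V l v \<le> reach w V l h"
proof (induction v rule: rev_induct)
  case Nil
  then show ?case unfolding honest_vertex_def by auto
next
  case (snoc x v)
  show ?case
  proof (cases "honest_vertex w l (v @ [x])")
    case False
    have "v \<in> V" using is_fork_prefix_closed[OF f snoc.prems] by simp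
    with snoc.IH obtain h where "prefix h v" "honest_vertex w l h" "reach w V l v \<le> reach w V l h"
      by blast
    with reach_snoc_le[OF f snoc.prems False] show ?thesis
      by (meson order.trans prefix_snoc)
  qed auto
qed

lemma is_fork_snoc_True: "is_fork w V l \<Longrightarrow> is_fork (w @ [True]) V l"
  unfolding is_fork_def by (auto simp: honest_idx_snoc)

lemma closed_fork_snoc_True_iff: "closed_fork (w @ [True]) V l \<longleftrightarrow> closed_fork w V l"
proof
  assume c: "closed_fork (w @ [True]) V l"
  then have f: "is_fork (w @ [True]) V l" unfolding closed_fork_def by simp
  have lab: "l v \<le> length w" if v: "v \<in> V" for v
  proof (rule ccontr)
    assume "\<not> l v \<le> length w"
    then have lv: "l v = Suc (length w)" using is_fork_label_le[OF f v] by simp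
    have "\<not> strict_prefix v u" if "u \<in> V" for u
      using is_fork_label_less[OF f v that] is_fork_label_le[OF f that] lv by auto
    then have "is_leaf V v" unfolding is_leaf_def using v by blast
    then have "honest_vertex (w @ [True]) l v" using c unfolding closed_fork_def by blast
    then show False using lv is_fork_label_root[OF f]
      unfolding honest_vertex_def by (auto simp: honest_idx_snoc honest_idx_def)
  qed
  have "is_fork w V l"
    using f lab unfolding is_fork_def by (simp add: honest_idx_snoc)
  then show "closed_fork w V l" using c unfolding closed_fork_def by (simp add: honest_vertex_snoc_True)
next
  assume "closed_fork w V l"
  then show "closed_fork (w @ [True]) V l"
    unfolding closed_fork_def by (simp add: is_fork_snoc_True honest_vertex_snoc_True)
qed

lemma rho_fork_snoc_True: "is_fork w V l \<Longrightarrow> rho_fork (w @ [True]) V l = rho_fork w V l + 1"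
proof -
  assume f: "is_fork w V l"
  then have "reach (w @ [True]) V l ` V = (\<lambda>v. reach w V l v + 1) ` V"
    unfolding reach_def by (auto simp: reserve_snoc_True is_fork_label_le)
  moreover have "V \<noteq> {}" using is_fork_root[OF f] by blast
  ultimately show ?thesis unfolding rho_fork_def using is_fork_finite[OF f]
    by (simp add: Max_add_commute)
qed

lemma is_fork_snoc_False_extend:
  assumes f: "is_fork w V l" and d: "d \<in> V" "length d = fork_height V"
  defines "x \<equiv> d @ [0]"
  shows "is_fork (w @ [False]) (insert x V) (l(x := Suc (length w)))"
proof -
  let ?l = "l(x := Suc (length w))"
  have deeper: "length v < length x" if "v \<in> V" for v
    using fork_height_ge[OF is_fork_finite[OF f] that] d(2) unfolding x_def by simp
  then have xV: "x \<notin> V" by blast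
  then have lV: "?l v = l v" if "v \<in> V" for v using that by auto
  have below: "u \<in> V" if "strict_prefix u v" "v \<in> insert x V" for u v
  proof (cases "v = x")
    case True
    then have "prefix u d" using that(1) unfolding x_def by (auto simp: strict_prefix_def)
    then show ?thesis using is_fork_prefix_closed[OF f d(1)] by blast
  qed (use that is_fork_prefix_closed[OF f] in \<open>auto simp: strict_prefix_def\<close>)
  have new_label: "?l v \<le> length w \<longleftrightarrow> v \<in> V" if "v \<in> insert x V" for v
    using that xV lV is_fork_label_le[OF f] by auto
  show ?thesis
    unfolding is_fork_def
  proof (intro conjI ballI allI impI)
    show "finite (insert x V)" using is_fork_finite[OF f] by simp
    show "[] \<in> insert x V" using is_fork_root[OF f] by simp
    show "?l [] = 0" using is_fork_root[OF f] is_fork_label_root[OF f] lV by simp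
  next
    fix v u assume "v \<in> insert x V" "prefix u v"
    then show "u \<in> insert x V" using below by (cases "u = v") (auto simp: strict_prefix_def)
  next
    fix v assume "v \<in> insert x V"
    then show "?l v \<le> length (w @ [False])" using new_label by force
  next
    fix u v assume "u \<in> insert x V" "v \<in> insert x V" "strict_prefix u v"
    moreover from this have "u \<in> V" using below by blast
    ultimately show "?l u < ?l v"
      using is_fork_label_less[OF f] is_fork_label_le[OF f] lV by (cases "v = x") (auto simp: less_Suc_eq_le)
  next
    fix i assume "honest_idx (w @ [False]) i"
    then consider "honest_idx w i" | "i = Suc (length w)" by (auto simp: honest_idx_snoc)
    then show "card {v \<in> insert x V. ?l v = i} = 1"
    proof cases
      case 1
      then have "{v \<in> insert x V. ?l v = i} = {v \<in> V. l v = i}"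
        using xV lV unfolding honest_idx_def by auto
      then show ?thesis using is_fork_honest_unique[OF f 1] by simp
    next
      case 2
      then have "{v \<in> insert x V. ?l v = i} = {x}" using new_label by fastforce
      then show ?thesis by simp
    qed
  next
    fix u v assume uv: "u \<in> insert x V" "v \<in> insert x V"
      and h: "honest_idx (w @ [False]) (?l u) \<and> honest_idx (w @ [False]) (?l v) \<and> ?l u < ?l v"
    then have "u \<in> V" using new_label[of v] new_label[OF uv(1)] by (cases "v \<in> V") auto
    show "length u < length v"
    proof (cases "v = x")
      case False
      then have "v \<in> V" using uv(2) by simp
      with \<open>u \<in> V\<close> h show ?thesis
        using is_fork_honest_depth[OF f \<open>u \<in> V\<close>] is_fork_label_le[OF f \<open>u \<in> V\<close>]
          is_fork_label_le[OF f \<open>v \<in> V\<close>] lV by (auto simp: honest_idx_snoc)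
    qed (use \<open>u \<in> V\<close> deeper in simp)
  qed
qed

lemma closed_fork_snoc_False_extend:
  assumes c: "closed_fork w V l" and d: "d \<in> V" "length d = fork_height V"
  shows "closed_fork (w @ [False]) (insert (d @ [0]) V) (l(d @ [0] := Suc (length w)))"
  unfolding closed_fork_def
proof (intro conjI allI impI)
  have f: "is_fork w V l" using c unfolding closed_fork_def by simp
  then show "is_fork (w @ [False]) (insert (d @ [0]) V) (l(d @ [0] := Suc (length w)))"
    using is_fork_snoc_False_extend[OF _ d] by simp
  fix v assume leaf: "is_leaf (insert (d @ [0]) V) v"
  show "honest_vertex (w @ [False]) (l(d @ [0] := Suc (length w))) v"
  proof (cases "v = d @ [0]")
    case False
    then have "is_leaf V v" using leaf unfolding is_leaf_def by auto
    then have "honest_vertex w l v" using c unfolding closed_fork_def by blast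
    with False show ?thesis unfolding honest_vertex_def by (auto simp: honest_idx_snoc)
  qed (simp add: honest_vertex_def honest_idx_snoc)
qed

lemma rho_fork_snoc_False_extend:
  assumes f: "is_fork w V l" and d: "d \<in> V" "length d = fork_height V"
  shows "rho_fork w V l - 1 \<le> rho_fork (w @ [False]) (insert (d @ [0]) V) (l(d @ [0] := Suc (length w)))"
proof -
  let ?V = "insert (d @ [0]) V" and ?l = "l(d @ [0] := Suc (length w))"
  have f': "is_fork (w @ [False]) ?V ?l" using is_fork_snoc_False_extend[OF f d] by simp
  have deepest: "length v \<le> length d" if "v \<in> V" for v
    using fork_height_ge[OF is_fork_finite[OF f] that] d(2) by simp
  have height: "fork_height ?V = Suc (length d)"
    unfolding fork_height_def using is_fork_finite[OF f] deepest by (intro Max_eqI) (auto intro: le_SucI)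
  obtain v where v: "v \<in> V" "reach w V l v = rho_fork w V l" using rho_fork_attained[OF f] by blast
  have "v \<noteq> d @ [0]" using deepest[OF v(1)] by auto
  then have "reserve (w @ [False]) ?l v = reserve w l v"
    using reserve_snoc_False[of w l v] unfolding reserve_def by simp
  then have "reach (w @ [False]) ?V ?l v = reach w V l v - 1"
    unfolding reach_def gap_def using height deepest[OF v(1)] d(2) by simp
  with v reach_le_rho_fork[OF f', of v] show ?thesis by simp
qed

lemma closed_fork_snoc_False_ge:
  assumes c: "closed_fork w V l"
  obtains V' l' where "closed_fork (w @ [False]) V' l'" "rho_fork w V l - 1 \<le> rho_fork (w @ [False]) V' l'"
proof -
  have f: "is_fork w V l" using c unfolding closed_fork_def by simp
  obtain d where "d \<in> V" "length d = fork_height V"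
    using fork_height_attained[OF is_fork_finite[OF f]] is_fork_root[OF f] by blast
  then show ?thesis
    using that closed_fork_snoc_False_extend[OF c] rho_fork_snoc_False_extend[OF f] by blast
qed

definition honest_part :: "bool list \<Rightarrow> nat list set \<Rightarrow> (nat list \<Rightarrow> nat) \<Rightarrow> nat list set" where
  "honest_part w V l = {v \<in> V. \<exists>h\<in>V. prefix v h \<and> honest_vertex w l h}"

lemma honest_idx_append: "honest_idx w i \<Longrightarrow> honest_idx (w @ u) i"
  unfolding honest_idx_def by (auto simp: nth_append)

lemma honest_vertex_label_le: "is_fork w' V l \<Longrightarrow> honest_vertex w l h \<Longrightarrow> l h \<le> length w"
  unfolding honest_vertex_def honest_idx_def using is_fork_label_root[of w' V l] by auto

lemma honest_part_subset: "honest_part w V l \<subseteq> V"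
  unfolding honest_part_def by blast

lemma honest_vertex_in_honest_part: "h \<in> V \<Longrightarrow> honest_vertex w l h \<Longrightarrow> h \<in> honest_part w V l"
  unfolding honest_part_def by blast

lemma is_fork_honest_part:
  assumes f: "is_fork (w @ u) V l"
  shows "is_fork w (honest_part w V l) l"
proof -
  let ?H = "honest_part w V l"
  note sub = honest_part_subset[of w V l] and self = honest_vertex_in_honest_part[of _ V w l]
  show ?thesis
    unfolding is_fork_def
  proof (intro conjI ballI allI impI)
    show "finite ?H" using is_fork_finite[OF f] sub by (rule finite_subset[rotated])
    show "[] \<in> ?H" using self[OF is_fork_root[OF f]] by (simp add: honest_vertex_def)
    show "l [] = 0" using is_fork_label_root[OF f] .
  next
    fix v x assume "v \<in> ?H" "prefix x v"
    then show "x \<in> ?H" unfolding honest_part_def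
      using is_fork_prefix_closed[OF f] prefix_order.order_trans by blast
  next
    fix v assume "v \<in> ?H"
    then obtain h where "v \<in> V" "h \<in> V" "prefix v h" "honest_vertex w l h"
      unfolding honest_part_def by blast
    then show "l v \<le> length w"
      using is_fork_label_mono[OF f] honest_vertex_label_le[OF f] by (meson order.trans)
  next
    fix x v assume "x \<in> ?H" "v \<in> ?H" "strict_prefix x v"
    then show "l x < l v" using is_fork_label_less[OF f] sub by blast
  next
    fix i assume i: "honest_idx w i"
    then have "card {v \<in> V. l v = i} = 1" using is_fork_honest_unique[OF f honest_idx_append] by blast
    moreover have "{v \<in> ?H. l v = i} = {v \<in> V. l v = i}"
      using self i sub unfolding honest_vertex_def by blast
    ultimately show "card {v \<in> ?H. l v = i} = 1" by simp
  next
    fix x v assume "x \<in> ?H" "v \<in> ?H" "honest_idx w (l x) \<and> honest_idx w (l v) \<and> l x < l v"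
    then show "length x < length v"
      using is_fork_honest_depth[OF f] honest_idx_append sub by blast
  qed
qed

lemma closed_fork_honest_part:
  assumes f: "is_fork (w @ u) V l"
  shows "closed_fork w (honest_part w V l) l"
  unfolding closed_fork_def
proof (intro conjI allI impI is_fork_honest_part[OF f])
  fix v assume leaf: "is_leaf (honest_part w V l) v"
  then obtain h where "h \<in> V" "prefix v h" "honest_vertex w l h"
    unfolding is_leaf_def honest_part_def by blast
  moreover have "h \<in> honest_part w V l" using honest_vertex_in_honest_part calculation by blast
  ultimately show "honest_vertex w l v" using leaf unfolding is_leaf_def by (metis strict_prefix_def)
qed

lemma fork_height_honest_part_less:
  assumes f: "is_fork (w @ [False]) V l"
  shows "fork_height (honest_part w V l) < fork_height V"
proof -
  let ?H = "honest_part w V l"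
  have "card {v \<in> V. l v = Suc (length w)} = 1"
    using is_fork_honest_unique[OF f] by (simp add: honest_idx_snoc)
  then obtain u where "{v \<in> V. l v = Suc (length w)} = {u}" by (rule card_1_singletonE)
  then have u: "u \<in> V" "l u = Suc (length w)" by auto
  have "u \<noteq> []" using u(2) is_fork_label_root[OF f] by auto
  have shallower: "length h < length u" if "h \<in> V" "honest_vertex w l h" for h
  proof (cases "h = []")
    case False
    then have "honest_idx w (l h)" using that(2) unfolding honest_vertex_def by simp
    moreover from this have "l h < l u" using u(2) unfolding honest_idx_def by simp
    ultimately show ?thesis
      using is_fork_honest_depth[OF f that(1) u(1)] u(2) by (simp add: honest_idx_snoc honest_idx_append)
  qed (use \<open>u \<noteq> []\<close> in simp)
  have "length v < length u" if v: "v \<in> ?H" for v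
  proof -
    obtain h where "h \<in> V" "prefix v h" "honest_vertex w l h"
      using v unfolding honest_part_def by blast
    then show ?thesis using shallower prefix_length_le by (meson le_less_trans)
  qed
  moreover have fH: "is_fork w ?H l" using closed_fork_honest_part[OF f] unfolding closed_fork_def ..
  then obtain d where "d \<in> ?H" "length d = fork_height ?H"
    using fork_height_attained[OF is_fork_finite[OF fH]] is_fork_root[OF fH] by blast
  ultimately have "fork_height ?H < length u" by metis
  also have "\<dots> \<le> fork_height V" using fork_height_ge[OF is_fork_finite[OF f] u(1)] .
  finally show ?thesis .
qed

lemma rho_fork_snoc_False_le:
  assumes f: "is_fork (w @ [False]) V l"
  shows "rho_fork (w @ [False]) V l \<le> max (rho_fork w (honest_part w V l) l - 1) 0"
  unfolding rho_fork_le_iff[OF f]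
proof
  let ?H = "honest_part w V l"
  have fH: "is_fork w ?H l" using closed_fork_honest_part[OF f] unfolding closed_fork_def by simp
  fix v assume "v \<in> V"
  then obtain h where h: "prefix h v" "honest_vertex (w @ [False]) l h"
    and le: "reach (w @ [False]) V l v \<le> reach (w @ [False]) V l h"
    using reach_le_honest_ancestor[OF f] by blast
  have hV: "h \<in> V" using is_fork_prefix_closed[OF f \<open>v \<in> V\<close> h(1)] .
  consider "honest_vertex w l h" | "l h = Suc (length w)"
    using h(2) unfolding honest_vertex_def by (auto simp: honest_idx_snoc)
  then have "reach (w @ [False]) V l h \<le> max (rho_fork w ?H l - 1) 0"
  proof cases
    case 1
    then have hH: "h \<in> ?H" using hV unfolding honest_part_def by blast
    have "fork_height ?H < fork_height V" by (rule fork_height_honest_part_less[OF f])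
    moreover have "length h \<le> fork_height ?H" using fork_height_ge[OF is_fork_finite[OF fH] hH] .
    ultimately have "reach (w @ [False]) V l h \<le> reach w ?H l h - 1"
      unfolding reach_def gap_def by (simp add: reserve_snoc_False)
    also have "\<dots> \<le> rho_fork w ?H l - 1" using reach_le_rho_fork[OF fH hH] by simp
    finally show ?thesis by simp
  next
    case 2
    then have "reserve (w @ [False]) l h = 0" by (simp add: reserve_eq_0)
    then show ?thesis unfolding reach_def by simp
  qed
  with le show "reach (w @ [False]) V l v \<le> max (rho_fork w ?H l - 1) 0" by simp
qed

lemma closed_fork_Nil: "closed_fork [] {[]} (\<lambda>_. 0)"
  unfolding closed_fork_def is_fork_def honest_vertex_def honest_idx_def is_leaf_def
  by auto

lemma closed_fork_exists: "\<exists>V l. closed_fork w V l"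
proof (induction w rule: rev_induct)
  case (snoc b w)
  then obtain V l where c: "closed_fork w V l" by blast
  show ?case
  proof (cases b)
    case True
    then have "closed_fork (w @ [b]) V l" using c closed_fork_snoc_True_iff by simp
    then show ?thesis by blast
  next
    case False
    obtain V' l' where "closed_fork (w @ [False]) V' l'" using closed_fork_snoc_False_ge[OF c] .
    with False have "closed_fork (w @ [b]) V' l'" by simp
    then show ?thesis by blast
  qed
qed (use closed_fork_Nil in blast)

lemma finite_rho_forks: "finite {rho_fork w V l | V l. closed_fork w V l}"
proof (rule finite_subset)
  show "{rho_fork w V l | V l. closed_fork w V l} \<subseteq> {0..int (length w)}"
    unfolding closed_fork_def using rho_fork_nonneg rho_fork_le_length by auto
qed simp

lemma rho_fork_le_rho: "closed_fork w V l \<Longrightarrow> rho_fork w V l \<le> rho w"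
  unfolding rho_def using finite_rho_forks by (intro Max_ge) auto

lemma rho_attained: "\<exists>V l. closed_fork w V l \<and> rho_fork w V l = rho w"
proof -
  have "rho w \<in> {rho_fork w V l | V l. closed_fork w V l}"
    unfolding rho_def using finite_rho_forks closed_fork_exists by (intro Max_in) auto
  then obtain V l where "closed_fork w V l" "rho w = rho_fork w V l" by blast
  then show ?thesis by auto
qed

lemma rho_Nil: "rho [] = 0"
proof -
  obtain V l where "closed_fork [] V l" "rho_fork [] V l = rho []"
    using rho_attained by blast
  then show ?thesis
    using rho_fork_nonneg[of "[]" V l] rho_fork_le_length[of "[]" V l] unfolding closed_fork_def by simp
qed

lemma rho_snoc_True: "rho (w @ [True]) = rho w + 1"
proof (rule antisym)
  obtain V l where "closed_fork (w @ [True]) V l" and r: "rho_fork (w @ [True]) V l = rho (w @ [True])"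
    using rho_attained by blast
  then have "closed_fork w V l" using closed_fork_snoc_True_iff by blast
  then show "rho (w @ [True]) \<le> rho w + 1"
    using r rho_fork_le_rho[of w V l] rho_fork_snoc_True[of w V l] unfolding closed_fork_def by simp
next
  obtain V l where c: "closed_fork w V l" and r: "rho_fork w V l = rho w"
    using rho_attained by blast
  then have "closed_fork (w @ [True]) V l" using closed_fork_snoc_True_iff by blast
  then show "rho w + 1 \<le> rho (w @ [True])"
    using r c rho_fork_le_rho[of "w @ [True]" V l] rho_fork_snoc_True[of w V l]
    unfolding closed_fork_def by simp
qed

lemma rho_snoc_False: "rho (w @ [False]) = max (rho w - 1) 0"
proof (rule antisym)
  obtain V l where c: "closed_fork (w @ [False]) V l" and r: "rho_fork (w @ [False]) V l = rho (w @ [False])"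
    using rho_attained by blast
  then have f: "is_fork (w @ [False]) V l" unfolding closed_fork_def by simp
  have "rho_fork w (honest_part w V l) l \<le> rho w"
    using rho_fork_le_rho[OF closed_fork_honest_part[OF f]] .
  then show "rho (w @ [False]) \<le> max (rho w - 1) 0"
    using r rho_fork_snoc_False_le[OF f] by simp
next
  obtain V l where c: "closed_fork w V l" and r: "rho_fork w V l = rho w"
    using rho_attained by blast
  obtain V' l' where c': "closed_fork (w @ [False]) V' l'"
    and ge: "rho_fork w V l - 1 \<le> rho_fork (w @ [False]) V' l'"
    using closed_fork_snoc_False_ge[OF c] .
  have "rho w - 1 \<le> rho (w @ [False])" using r ge rho_fork_le_rho[OF c'] by simp
  moreover have "0 \<le> rho (w @ [False])"
    using rho_fork_nonneg[of "w @ [False]" V' l'] rho_fork_le_rho[OF c'] c'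
    unfolding closed_fork_def by simp
  ultimately show "max (rho w - 1) 0 \<le> rho (w @ [False])" by simp
qed

theorem rho_eq_reflected_walk: "rho w = int (reflected_walk 0 w)"
proof (induction w rule: rev_induct)
  case (snoc b w)
  then show ?case
    by (cases b) (auto simp: rho_snoc_True rho_snoc_False reflected_walk_snoc max_def)
qed (simp add: rho_Nil)

lemma measure_bind_bernoulli_pmf:
  assumes "0 \<le> q" "q \<le> 1"
  shows "measure_pmf.prob (bind_pmf (bernoulli_pmf q) f) A
    = q * measure_pmf.prob (f True) A + (1 - q) * measure_pmf.prob (f False) A"
proof -
  have "emeasure (bind_pmf (bernoulli_pmf q) f) A
      = emeasure (f True) A * ennreal q + emeasure (f False) A * ennreal (1 - q)"
    using assms by simp
  then show ?thesis using assms
    by (simp add: measure_pmf.emeasure_eq_measure ennreal_mult'[symmetric]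
        ennreal_plus[symmetric] mult.commute del: ennreal_plus)
qed

lemma bernoulli_list_Suc_snoc:
  "bernoulli_list (Suc n) q = bind_pmf (bernoulli_pmf q) (\<lambda>b. map_pmf (\<lambda>w. w @ [b]) (bernoulli_list n q))"
proof (induction n)
  case (Suc n)
  have "bernoulli_list (Suc (Suc n)) q = bind_pmf (bernoulli_pmf q) (\<lambda>a. map_pmf (Cons a)
      (bind_pmf (bernoulli_pmf q) (\<lambda>b. map_pmf (\<lambda>w. w @ [b]) (bernoulli_list n q))))"
    by (subst bernoulli_list.simps(2)) (simp only: Suc.IH)
  also have "\<dots> = bind_pmf (bernoulli_pmf q) (\<lambda>b. map_pmf (\<lambda>w. w @ [b]) (bernoulli_list (Suc n) q))"
    by (simp add: map_bind_pmf map_pmf_comp) (rule bind_commute_pmf)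
  finally show ?case .
qed (simp add: map_pmf_def bind_return_pmf)

lemma prob_bernoulli_list_Suc:
  assumes "0 \<le> q" "q \<le> 1"
  shows "measure_pmf.prob (bernoulli_list (Suc n) q) A
    = q * measure_pmf.prob (bernoulli_list n q) {w. True # w \<in> A}
      + (1 - q) * measure_pmf.prob (bernoulli_list n q) {w. False # w \<in> A}"
  unfolding bernoulli_list.simps(2) measure_bind_bernoulli_pmf[OF assms] by (simp add: vimage_def)

lemma prob_bernoulli_list_Suc_snoc:
  assumes "0 \<le> q" "q \<le> 1"
  shows "measure_pmf.prob (bernoulli_list (Suc n) q) A
    = q * measure_pmf.prob (bernoulli_list n q) {w. w @ [True] \<in> A}
      + (1 - q) * measure_pmf.prob (bernoulli_list n q) {w. w @ [False] \<in> A}"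
  unfolding bernoulli_list_Suc_snoc measure_bind_bernoulli_pmf[OF assms] by (simp add: vimage_def)

definition walk_tail :: "real \<Rightarrow> nat \<Rightarrow> nat \<Rightarrow> nat \<Rightarrow> real" where
  "walk_tail q m n s = measure_pmf.prob (bernoulli_list n q) {w. m \<le> reflected_walk s w}"

lemma walk_tail_Suc:
  "0 \<le> q \<Longrightarrow> q \<le> 1 \<Longrightarrow>
    walk_tail q m (Suc n) s = q * walk_tail q m n (Suc s) + (1 - q) * walk_tail q m n (s - 1)"
  unfolding walk_tail_def by (subst prob_bernoulli_list_Suc) auto

lemma walk_tail_mono: "s \<le> s' \<Longrightarrow> walk_tail q m n s \<le> walk_tail q m n s'"
  unfolding walk_tail_def
  by (rule measure_pmf.finite_measure_mono) (auto intro: order_trans[OF _ reflected_walk_mono])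

lemma finite_lists_length_eq_Collect: "finite {w :: bool list. length w = n \<and> P w}"
  by (rule finite_subset[OF _ finite_lists_length_eq[of "UNIV :: bool set" n]]) auto

lemma sum_lists_length_Suc:
  "(\<Sum>w | length w = Suc n \<and> P w. f w)
    = (\<Sum>w | length w = n \<and> P (True # w). f (True # w)) + (\<Sum>w | length w = n \<and> P (False # w). f (False # w))"
proof -
  have "{w. length w = Suc n \<and> P w}
      = Cons True ` {w. length w = n \<and> P (True # w)} \<union> Cons False ` {w. length w = n \<and> P (False # w)}"
  proof (rule set_eqI)
    fix w :: "bool list"
    show "w \<in> {w. length w = Suc n \<and> P w} \<longleftrightarrow>
        w \<in> Cons True ` {w. length w = n \<and> P (True # w)} \<union> Cons False ` {w. length w = n \<and> P (False # w)}"
    proof (cases w)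
      case (Cons a v)
      then show ?thesis by (cases a) auto
    qed auto
  qed
  moreover have "sum f (Cons True ` {w. length w = n \<and> P (True # w)} \<union> Cons False ` {w. length w = n \<and> P (False # w)})
      = sum f (Cons True ` {w. length w = n \<and> P (True # w)}) + sum f (Cons False ` {w. length w = n \<and> P (False # w)})"
    by (rule sum.union_disjoint) (auto intro: finite_lists_length_eq_Collect)
  ultimately show ?thesis by (simp add: sum.reindex)
qed

lemma sum_lists_length_Suc_all:
  "(\<Sum>w | length w = Suc n. f w) = (\<Sum>w | length w = n. f (True # w)) + (\<Sum>w | length w = n. f (False # w))"
  using sum_lists_length_Suc[where P = "\<lambda>_. True"] by simp

text \<open>The martingale condition for unnormalised weights. Unlike a condition on conditional
  probabilities, it passes to the weights \<open>\<lambda>w. \<mu> (b # w)\<close> of the strings starting with \<open>b\<close>,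
  so the domination can be proved by induction on the length without conditioning.\<close>
definition bias_le :: "real \<Rightarrow> nat \<Rightarrow> (bool list \<Rightarrow> real) \<Rightarrow> bool" where
  "bias_le q n \<mu> \<longleftrightarrow> (\<forall>t<n. \<forall>p. length p = t \<longrightarrow>
     (\<Sum>w | length w = n \<and> take t w = p \<and> w ! t. \<mu> w) \<le> q * (\<Sum>w | length w = n \<and> take t w = p. \<mu> w))"

lemma bias_le_Cons: "bias_le q (Suc n) \<mu> \<Longrightarrow> bias_le q n (\<lambda>w. \<mu> (b # w))"
  unfolding bias_le_def
proof (intro allI impI)
  fix t and p :: "bool list"
  assume "\<forall>t<Suc n. \<forall>p. length p = t \<longrightarrow>
     (\<Sum>w | length w = Suc n \<and> take t w = p \<and> w ! t. \<mu> w) \<le> q * (\<Sum>w | length w = Suc n \<and> take t w = p. \<mu> w)"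
    and "t < n" "length p = t"
  then have "(\<Sum>w | length w = Suc n \<and> take (Suc t) w = b # p \<and> w ! Suc t. \<mu> w)
      \<le> q * (\<Sum>w | length w = Suc n \<and> take (Suc t) w = b # p. \<mu> w)"
    by auto
  then show "(\<Sum>w | length w = n \<and> take t w = p \<and> w ! t. \<mu> (b # w))
      \<le> q * (\<Sum>w | length w = n \<and> take t w = p. \<mu> (b # w))"
    by (cases b) (simp_all add: sum_lists_length_Suc)
qed

lemma bias_le_head:
  "bias_le q (Suc n) \<mu> \<Longrightarrow> (\<Sum>w | length w = n. \<mu> (True # w)) \<le> q * (\<Sum>w | length w = Suc n. \<mu> w)"
  unfolding bias_le_def by (drule spec[of _ 0]) (simp add: sum_lists_length_Suc sum_lists_length_Suc_all)

lemma sum_reflected_walk_tail_le: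
  assumes q: "0 \<le> q" "q \<le> 1"
  shows "(\<forall>w. 0 \<le> \<mu> w) \<Longrightarrow> bias_le q n \<mu> \<Longrightarrow>
    (\<Sum>w | length w = n \<and> m \<le> reflected_walk s w. \<mu> w) \<le> walk_tail q m n s * (\<Sum>w | length w = n. \<mu> w)"
proof (induction n arbitrary: s \<mu>)
  case 0
  have "{w :: bool list. length w = 0 \<and> m \<le> reflected_walk s w} = (if m \<le> s then {[]} else {})"
    by auto
  moreover have "{w :: bool list. length w = 0} = {[]}" by auto
  ultimately show ?case using "0.prems"(1) by (simp add: walk_tail_def)
next
  case (Suc n)
  let ?M1 = "\<Sum>w | length w = n. \<mu> (True # w)" and ?M0 = "\<Sum>w | length w = n. \<mu> (False # w)"
  let ?g1 = "walk_tail q m n (Suc s)" and ?g0 = "walk_tail q m n (s - 1)"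
  have "(\<Sum>w | length w = Suc n \<and> m \<le> reflected_walk s w. \<mu> w)
      = (\<Sum>w | length w = n \<and> m \<le> reflected_walk (Suc s) w. \<mu> (True # w))
        + (\<Sum>w | length w = n \<and> m \<le> reflected_walk (s - 1) w. \<mu> (False # w))"
    by (simp add: sum_lists_length_Suc)
  also have "\<dots> \<le> ?g1 * ?M1 + ?g0 * ?M0"
    using Suc.prems by (intro add_mono Suc.IH bias_le_Cons) auto
  also have "\<dots> \<le> (q * ?g1 + (1 - q) * ?g0) * (?M1 + ?M0)"
  proof -
    \<comment> \<open>the tail is larger after an up-step, so the bound is worst when the up-weight is maximal\<close>
    have "0 \<le> ?g1 - ?g0" using walk_tail_mono[of "s - 1" "Suc s"] by simp
    moreover have "?M1 \<le> q * (?M1 + ?M0)"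
      using bias_le_head[OF Suc.prems(2)] by (simp add: sum_lists_length_Suc_all)
    ultimately have "(?g1 - ?g0) * ?M1 \<le> (?g1 - ?g0) * (q * (?M1 + ?M0))"
      by (rule mult_left_mono[rotated])
    then show ?thesis by (simp add: algebra_simps)
  qed
  also have "\<dots> = walk_tail q m (Suc n) s * (\<Sum>w | length w = Suc n. \<mu> w)"
    by (simp add: walk_tail_Suc[OF q] sum_lists_length_Suc_all)
  finally show ?case .
qed

lemma prob_eq_sum_lists_length:
  fixes W :: "bool list pmf"
  assumes "\<forall>w\<in>set_pmf W. length w = n"
  shows "measure_pmf.prob W {w. P w} = (\<Sum>w | length w = n \<and> P w. pmf W w)"
proof -
  have "{w. P w} \<inter> set_pmf W = {w. length w = n \<and> P w} \<inter> set_pmf W" using assms by auto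
  then have "measure_pmf.prob W {w. P w} = measure_pmf.prob W {w. length w = n \<and> P w}"
    by (metis measure_Int_set_pmf)
  also have "\<dots> = (\<Sum>w | length w = n \<and> P w. pmf W w)"
    by (rule measure_measure_pmf_finite[OF finite_lists_length_eq_Collect])
  finally show ?thesis .
qed

lemma eps_martingale_bias_le:
  fixes W :: "bool list pmf"
  assumes "\<forall>w\<in>set_pmf W. length w = n" "eps_martingale \<epsilon> n W"
  shows "bias_le ((1 - \<epsilon>) / 2) n (pmf W)"
  using assms(2) unfolding eps_martingale_def bias_le_def prob_eq_sum_lists_length[OF assms(1)] .

lemma prob_reflected_walk_le_bernoulli:
  fixes W :: "bool list pmf"
  assumes q: "0 \<le> q" "q \<le> 1" and len: "\<forall>w\<in>set_pmf W. length w = n" and bias: "bias_le q n (pmf W)"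
  shows "measure_pmf.prob W {w. m \<le> reflected_walk 0 w}
    \<le> measure_pmf.prob (bernoulli_list n q) {w. m \<le> reflected_walk 0 w}"
proof -
  have "(\<Sum>w | length w = n. pmf W w) = 1"
    using prob_eq_sum_lists_length[OF len, of "\<lambda>_. True"] by simp
  then show ?thesis
    using sum_reflected_walk_tail_le[OF q _ bias, of m 0]
    unfolding prob_eq_sum_lists_length[OF len] walk_tail_def by simp
qed

lemma prob_reflected_walk_le_geometric:
  assumes q: "0 \<le> q" "q < 1"
  shows "measure_pmf.prob (bernoulli_list n q) {w. m \<le> reflected_walk 0 w} \<le> (q / (1 - q)) ^ m"
proof (induction n arbitrary: m)
  case 0
  show ?case using q by (cases m) auto
next
  case (Suc n)
  let ?r = "q / (1 - q)"
  show ?case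
  proof (cases m)
    case (Suc k)
    have "{w. Suc k \<le> reflected_walk 0 w - 1} = {w. Suc (Suc k) \<le> reflected_walk 0 w}" by auto
    then have "measure_pmf.prob (bernoulli_list (Suc n) q) {w. m \<le> reflected_walk 0 w}
        = q * measure_pmf.prob (bernoulli_list n q) {w. k \<le> reflected_walk 0 w}
          + (1 - q) * measure_pmf.prob (bernoulli_list n q) {w. Suc (Suc k) \<le> reflected_walk 0 w}"
      unfolding prob_bernoulli_list_Suc_snoc[OF q(1) less_imp_le[OF q(2)]] using Suc
      by (simp add: reflected_walk_snoc del: bernoulli_list.simps)
    also have "\<dots> \<le> q * ?r ^ k + (1 - q) * ?r ^ Suc (Suc k)"
      using Suc.IH[of k] Suc.IH[of "Suc (Suc k)"] q by (intro add_mono mult_left_mono) auto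
    also have "\<dots> = (q + (1 - q) * ?r * ?r) * ?r ^ k" by (simp add: algebra_simps)
    also have "\<dots> = ?r ^ m"
    proof -
      have "(1 - q) * ?r = q" "q + q * ?r = ?r" using q by (simp_all add: field_simps)
      then show ?thesis using Suc by (simp only: power_Suc)
    qed
    finally show ?thesis .
  qed simp
qed

lemma prob_geometric_tail:
  assumes "\<forall>k. pmf R k = (1 - r) * r ^ k"
  shows "measure_pmf.prob R {k. m \<le> k} = r ^ m"
proof -
  have "sum (pmf R) {..<m} = 1 - r ^ m"
    by (induction m) (simp_all add: assms algebra_simps)
  moreover have "{k. m \<le> k} = space (measure_pmf R) - {..<m}" by auto
  ultimately show ?thesis
    using measure_pmf.prob_compl[of "{..<m}" R] measure_measure_pmf_finite[of "{..<m}" R] by simp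
qed

theorem lemma4:
  fixes \<epsilon> :: real and n :: nat and W :: "bool list pmf" and R :: "nat pmf"
  assumes "0 < \<epsilon>" and "\<epsilon> < 1"
    and "\<forall>w \<in> set_pmf W. length w = n"
    and "eps_martingale \<epsilon> n W"
    and "\<forall>k. pmf R k = 2 * \<epsilon> / (1 + \<epsilon>) * ((1 - \<epsilon>) / (1 + \<epsilon>)) ^ k"
  shows "\<forall>\<Lambda>::real.
           measure_pmf.prob W {w. \<Lambda> \<le> of_int (rho w)}
             \<le> measure_pmf.prob (bernoulli_list n ((1 - \<epsilon>) / 2)) {w. \<Lambda> \<le> of_int (rho w)}
         \<and> measure_pmf.prob (bernoulli_list n ((1 - \<epsilon>) / 2)) {w. \<Lambda> \<le> of_int (rho w)}
             \<le> measure_pmf.prob R {k. \<Lambda> \<le> of_nat k}"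
proof (intro allI conjI)
  fix \<Lambda> :: real
  define q where "q = (1 - \<epsilon>) / 2"
  define r where "r = (1 - \<epsilon>) / (1 + \<epsilon>)"
  define m where "m = nat \<lceil>\<Lambda>\<rceil>"
  have q: "0 \<le> q" "q < 1" using assms(1,2) by (simp_all add: q_def)
  have threshold: "\<Lambda> \<le> real k \<longleftrightarrow> m \<le> k" for k
    unfolding m_def by (simp add: nat_le_iff ceiling_le_iff)
  have rho_tail: "{w. \<Lambda> \<le> of_int (rho w)} = {w. m \<le> reflected_walk 0 w}"
    using threshold by (simp add: rho_eq_reflected_walk)
  show "measure_pmf.prob W {w. \<Lambda> \<le> of_int (rho w)}
      \<le> measure_pmf.prob (bernoulli_list n ((1 - \<epsilon>) / 2)) {w. \<Lambda> \<le> of_int (rho w)}"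
    unfolding rho_tail using prob_reflected_walk_le_bernoulli[OF q(1) _ assms(3)]
      eps_martingale_bias_le[OF assms(3,4)] q(2) by (simp add: q_def)
  have "q / (1 - q) = r" "2 * \<epsilon> / (1 + \<epsilon>) = 1 - r"
    using assms(1) by (simp_all add: q_def r_def field_simps)
  then have "measure_pmf.prob (bernoulli_list n q) {w. m \<le> reflected_walk 0 w}
      \<le> measure_pmf.prob R {k. m \<le> k}"
    using prob_reflected_walk_le_geometric[OF q] prob_geometric_tail[of R r] assms(5)
    by (simp add: r_def)
  then show "measure_pmf.prob (bernoulli_list n ((1 - \<epsilon>) / 2)) {w. \<Lambda> \<le> of_int (rho w)}
      \<le> measure_pmf.prob R {k. \<Lambda> \<le> of_nat k}"
    unfolding rho_tail q_def using threshold by simp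
qed

end
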